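(* Let $T$ be a compact torus with Lie algebra $\mathfrak t$ and cocharacter lattice $\mathfrak t_{\mathbb Z}\subset\mathfrak t$, let $a_1,\dots,a_n$ be the weights of $T$ on a Lagrangian half of the representation $V$ as in the context, and let $R^+$ be the set of positive roots of $G$ with respect to $T$. Define $$\Delta(\beta)=\frac12\sum_{j=1}^n|a_j(\beta)|-\sum_{\alpha\in R^+}|\alpha(\beta)|,\qquad\beta\in\mathfrak t.$$ Then $\Delta(\beta)>0$ for all nonzero $\beta\in\mathfrak t$ if and only if $\Delta(\beta)>0$ for all nonzero $\beta\in\mathfrak t_{\mathbb Z}$.
   Context: $G$ is a connected compact Lie group with maximal torus $T$, acting on a complex symplectic vector space $(V,\Omega)$ of dimension $2n$ through $USp(V,\Omega)$. A Darboux basis $x_1,\dots,x_n,y_1,\dots,y_n$ of $T$-weight vectors is fixed with $\beta x_j=-a_j(\beta)x_j$, $\beta y_j=a_j(\beta)y_j$ for $\beta\in\mathfrak t$; the $a_j$ and the roots $\alpha\in R^+$ are linear functionals on $\mathfrak t$ (with imaginary values) which take values in $i\mathbb Q$ (up to a fixed common normalization, values in a rational multiple of $i\mathbb Z$) on $\mathfrak t_{\mathbb Z}$. *)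

theory Defs
  imports "HOL-Analysis.Analysis"
begin

text \<open>The Lie algebra t of the torus T is modelled as real^'r (r = rank), with the
  cocharacter lattice t_Z identified with the integer points (via a lattice basis).\<close>

definition coch_lattice :: "(real ^ 'r) set" where
  "coch_lattice = {\<beta>. \<forall>i. \<beta> $ i \<in> \<int>}"

definition rat_imag_weight :: "(real ^ 'r \<Rightarrow> complex) \<Rightarrow> bool" where
  "rat_imag_weight f \<longleftrightarrow> linear f \<and> (\<forall>\<beta>. Re (f \<beta>) = 0)
     \<and> (\<forall>\<beta>\<in>coch_lattice. Im (f \<beta>) \<in> \<rat>)"

definition Delta :: "nat \<Rightarrow> (nat \<Rightarrow> real ^ 'r \<Rightarrow> complex) \<Rightarrow> (real ^ 'r \<Rightarrow> complex) set
    \<Rightarrow> real ^ 'r \<Rightarrow> real" where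
  "Delta n a Rpos \<beta> = (1/2) * (\<Sum>j=1..n. cmod (a j \<beta>)) - (\<Sum>\<alpha>\<in>Rpos. cmod (\<alpha> \<beta>))"

end

theory Submission
  imports Defs
begin

text \<open>
  Write \<Delta> = \<Sum>i. c_i |f_i| with rational c_i and real linear forms f_i (the Im a_j and Im \<alpha>)
  that are rational on the lattice.  Then \<Delta> is positively homogeneous, and on the cone of
  points whose f_i have the same signs as at a given \<beta> \<noteq> 0 it agrees with the rational
  linear form L = \<Sum>i. c_i sgn(f_i \<beta>) f_i.  The f_i vanishing at \<beta> cut out a subspace
  defined over \<rat>, in which the rational points are dense; so near \<beta> there is a rational
  q \<noteq> 0 with the same sign pattern as \<beta> for all f_i and for L, and \<Delta> q has the sign of
  \<Delta> \<beta>.  Clearing denominators by homogeneity turns q into a lattice point.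
\<close>

definition rational_points :: "(real ^ 'r) set" where
  "rational_points = {x. \<forall>i. x $ i \<in> \<rat>}"

definition rational_functional :: "(real ^ 'r \<Rightarrow> real) \<Rightarrow> bool" where
  "rational_functional g \<longleftrightarrow> linear g \<and> (\<forall>x\<in>coch_lattice. g x \<in> \<rat>)"

definition common_kernel :: "(real ^ 'r \<Rightarrow> real) set \<Rightarrow> (real ^ 'r) set" where
  "common_kernel G = {x. \<forall>g\<in>G. g x = 0}"

lemma closure_rational_points: "closure rational_points = UNIV"
proof -
  have "(\<Sum>b\<in>Basis. f b *\<^sub>R b) \<in> rational_points" if "f \<in> Basis \<rightarrow> \<rat>" for f
  proof -
    have "axis i 1 \<in> (Basis :: (real ^ 'r) set)" for i
      by simp
    then show ?thesis
      using that by (auto simp: vector_cart[symmetric] rational_points_def)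
  qed
  then have "closure (\<Union>f \<in> Basis \<rightarrow> \<rat>. {\<Sum>b\<in>Basis. f b *\<^sub>R b}) \<subseteq> closure rational_points"
    by (intro closure_mono) blast
  then show ?thesis
    by (auto simp: closure_rational_coordinates)
qed

lemma rational_point_scaleR_in_lattice:
  assumes "x \<in> rational_points"
  obtains d :: real where "d > 0" "d *\<^sub>R x \<in> coch_lattice"
proof -
  have "\<forall>i. \<exists>m::nat. m > 0 \<and> real m * x $ i \<in> \<int>"
  proof
    fix i
    obtain p q where "q > 0" "x $ i = of_int p / of_int q"
      using assms Rats_cases' unfolding rational_points_def by blast
    then show "\<exists>m::nat. m > 0 \<and> real m * x $ i \<in> \<int>"
      by (intro exI[of _ "nat q"]) auto
  qed
  then obtain m where m: "\<And>i. m i > 0" "\<And>i. real (m i) * x $ i \<in> \<int>"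
    by metis
  define d where "d = (\<Prod>i\<in>UNIV. real (m i))"
  have "d * x $ i \<in> \<int>" for i
  proof -
    have "d = real (m i) * (\<Prod>j\<in>UNIV - {i}. real (m j))"
      by (simp add: d_def prod.remove)
    then have "d * x $ i = (real (m i) * x $ i) * (\<Prod>j\<in>UNIV - {i}. real (m j))"
      by (simp only: mult_ac)
    also have "\<dots> \<in> \<int>"
      by (rule Ints_mult[OF m(2) Ints_prod]) simp
    finally show ?thesis .
  qed
  moreover have "d > 0"
    using m(1) by (simp add: d_def prod_pos)
  ultimately show thesis
    by (intro that) (auto simp: coch_lattice_def)
qed

lemma rational_functional_rational_points:
  assumes "rational_functional g" "x \<in> rational_points"
  shows "g x \<in> \<rat>"
proof -
  have "g (axis i 1) \<in> \<rat>" for i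
    using assms(1) by (auto simp: rational_functional_def coch_lattice_def axis_def)
  moreover have "g x = (\<Sum>i\<in>UNIV. x $ i * g (axis i 1))"
  proof -
    have "g x = g (\<Sum>i\<in>UNIV. x $ i *s axis i 1)"
      by (simp add: basis_expansion)
    also have "\<dots> = (\<Sum>i\<in>UNIV. x $ i * g (axis i 1))"
      using assms(1) by (simp add: rational_functional_def linear_sum linear_scale scalar_mult_eq_scaleR)
    finally show ?thesis .
  qed
  ultimately show ?thesis
    using assms(2) by (auto simp: rational_points_def intro!: Rats_sum Rats_mult)
qed

lemma rational_functional_linear_combination:
  assumes "\<forall>i\<in>I. rational_functional (f i)" "\<forall>i\<in>I. c i \<in> \<rat>"
  shows "rational_functional (\<lambda>x. \<Sum>i\<in>I. c i * f i x)"
proof -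
  have "linear (\<lambda>x. c i * f i x)" if "i \<in> I" for i
    using assms(1) that linear_compose[of "f i" "(*) (c i)"]
    by (simp add: rational_functional_def o_def linearI distrib_left)
  then show ?thesis
    using assms by (auto simp: rational_functional_def intro!: linear_compose_sum Rats_sum Rats_mult)
qed

lemma rational_functional_continuous_on: "rational_functional g \<Longrightarrow> continuous_on S g"
  by (simp add: rational_functional_def linear_continuous_on linear_conv_bounded_linear)

lemma common_kernel_insert: "common_kernel (insert g G) = common_kernel G \<inter> {x. g x = 0}"
  by (auto simp: common_kernel_def)

lemma common_kernel_subset_closure_rational_points:
  assumes "finite G" "\<forall>g\<in>G. rational_functional g"
  shows "common_kernel G \<subseteq> closure (rational_points \<inter> common_kernel G)"
  using assms
proof (induction G rule: finite_induct)
  case empty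
  show ?case by (simp add: common_kernel_def closure_rational_points)
next
  case (insert g G)
  let ?K = "common_kernel G" and ?K' = "common_kernel (insert g G)"
  have IH: "?K \<subseteq> closure (rational_points \<inter> ?K)"
    and g: "rational_functional g"
    using insert by auto
  show ?case
  proof (cases "\<forall>x\<in>?K. g x = 0")
    case True
    then have "?K' = ?K" by (auto simp: common_kernel_insert)
    then show ?thesis using IH by simp
  next
    case False
    have "open {x. g x \<noteq> 0}"
      using g by (intro open_Collect_neq rational_functional_continuous_on continuous_on_const)
    moreover from False have "{x. g x \<noteq> 0} \<inter> closure (rational_points \<inter> ?K) \<noteq> {}"
      using IH by blast
    ultimately obtain u where u: "g u \<noteq> 0" "u \<in> rational_points" "u \<in> ?K"
      using open_Int_closure_eq_empty by blast
    define p where "p x = x - (g x / g u) *\<^sub>R u" for x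
    have lin: "linear h" if "h \<in> insert g G" for h
      using that insert.prems by (auto simp: rational_functional_def)
    have "p ` (rational_points \<inter> ?K) \<subseteq> rational_points \<inter> ?K'"
    proof safe
      fix x assume x: "x \<in> rational_points" "x \<in> ?K"
      have "g x \<in> \<rat>" "g u \<in> \<rat>"
        using g x u by (auto intro: rational_functional_rational_points)
      then show "p x \<in> rational_points"
        using x u by (auto simp: rational_points_def p_def)
      show "p x \<in> ?K'"
        using x u lin by (auto simp: common_kernel_def p_def linear_diff linear_scale)
    qed
    moreover have p_cont: "continuous_on UNIV p"
      unfolding p_def using g u
      by (intro continuous_intros rational_functional_continuous_on) auto
    ultimately have "p ` closure (rational_points \<inter> ?K) \<subseteq> closure (rational_points \<inter> ?K')"
      by (intro image_closure_subset continuous_on_subset[OF p_cont])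
        (use closure_subset in blast)+
    moreover have "p x = x" if "x \<in> ?K'" for x
      using that by (simp add: p_def common_kernel_def)
    ultimately show ?thesis
      using IH by (force simp: common_kernel_insert)
  qed
qed

lemma sgn_eq_of_mult_pos: "0 < a * b \<Longrightarrow> sgn a = sgn (b :: real)"
  by (auto simp: sgn_real_def zero_less_mult_iff)

lemma rational_point_with_same_signs:
  assumes "finite F" "\<forall>f\<in>F. rational_functional f" "x \<noteq> 0"
  obtains q where "q \<in> rational_points" "q \<noteq> 0" "\<forall>f\<in>F. sgn (f q) = sgn (f x)"
proof -
  define G where "G = {f\<in>F. f x = 0}"
  define U where "U = {y. y \<noteq> 0} \<inter> (\<Inter>f\<in>F - G. {y. 0 < f y * f x})"
  have "open {y. 0 < f y * f x}" if "f \<in> F" for f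
    using assms(2) that
    by (intro open_Collect_less continuous_intros rational_functional_continuous_on) auto
  then have "open U"
    unfolding U_def using assms(1)
    by (intro open_Int open_INT open_Collect_neq continuous_intros) auto
  moreover have "x \<in> U \<inter> common_kernel G"
    using assms(3) by (auto simp: U_def G_def common_kernel_def zero_less_mult_iff)
  moreover have "common_kernel G \<subseteq> closure (rational_points \<inter> common_kernel G)"
    using assms(1,2) by (intro common_kernel_subset_closure_rational_points) (auto simp: G_def)
  ultimately obtain q where q: "q \<in> U" "q \<in> rational_points" "q \<in> common_kernel G"
    using open_Int_closure_eq_empty[of U] by blast
  have "sgn (f q) = sgn (f x)" if "f \<in> F" for f
  proof (cases "f \<in> G")
    case True
    then show ?thesis using q(3) by (auto simp: common_kernel_def G_def)
  next
    case False
    then show ?thesis using q(1) that by (auto simp: U_def intro: sgn_eq_of_mult_pos)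
  qed
  with q show thesis
    by (intro that) (auto simp: U_def)
qed

lemma sum_abs_scaleR:
  assumes "\<forall>i\<in>I. linear (f i)" "d \<ge> 0"
  shows "(\<Sum>i\<in>I. c i * \<bar>f i (d *\<^sub>R x)\<bar>) = d * (\<Sum>i\<in>I. c i * \<bar>f i x\<bar>)"
  using assms by (simp add: sum_distrib_left linear_scale abs_mult mult.left_commute)

lemma lattice_point_with_same_sign_of_sum_abs:
  assumes "finite I" "\<forall>i\<in>I. rational_functional (f i)" "\<forall>i\<in>I. c i \<in> \<rat>" "x \<noteq> 0"
  obtains y where "y \<in> coch_lattice" "y \<noteq> 0"
    "sgn (\<Sum>i\<in>I. c i * \<bar>f i y\<bar>) = sgn (\<Sum>i\<in>I. c i * \<bar>f i x\<bar>)"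
proof -
  let ?\<Phi> = "\<lambda>y. \<Sum>i\<in>I. c i * \<bar>f i y\<bar>"
  define L where "L y = (\<Sum>i\<in>I. (c i * sgn (f i x)) * f i y)" for y
  have "rational_functional L"
    unfolding L_def using assms(2,3)
    by (intro rational_functional_linear_combination) (auto simp: sgn_real_def)
  then obtain q where q: "q \<in> rational_points" "q \<noteq> 0"
    and q_signs: "\<forall>g\<in>insert L (f ` I). sgn (g q) = sgn (g x)"
    using rational_point_with_same_signs[of "insert L (f ` I)" x] assms by auto
  have \<Phi>_eq_L: "?\<Phi> y = L y" if "\<forall>i\<in>I. sgn (f i y) = sgn (f i x)" for y
    using that by (simp add: L_def abs_sgn mult_ac)
  obtain d where d: "d > 0" "d *\<^sub>R q \<in> coch_lattice"
    using rational_point_scaleR_in_lattice q(1) by blast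
  have "sgn (?\<Phi> (d *\<^sub>R q)) = sgn (?\<Phi> q)"
    using assms(2) d(1) by (simp add: sum_abs_scaleR rational_functional_def sgn_mult)
  also have "\<dots> = sgn (L q)"
    using q_signs \<Phi>_eq_L by simp
  also have "\<dots> = sgn (L x)"
    using q_signs by simp
  also have "\<dots> = sgn (?\<Phi> x)"
    using \<Phi>_eq_L by simp
  finally show thesis
    using d q(2) by (intro that[of "d *\<^sub>R q"]) auto
qed

theorem sum_abs_pos_iff_pos_on_lattice:
  assumes "finite I" "\<forall>i\<in>I. rational_functional (f i)" "\<forall>i\<in>I. c i \<in> \<rat>"
  shows "(\<forall>x::real ^ 'r. x \<noteq> 0 \<longrightarrow> (\<Sum>i\<in>I. c i * \<bar>f i x\<bar>) > 0) \<longleftrightarrow>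
         (\<forall>x\<in>coch_lattice. x \<noteq> 0 \<longrightarrow> (\<Sum>i\<in>I. c i * \<bar>f i x\<bar>) > 0)"
    (is "(\<forall>x. x \<noteq> 0 \<longrightarrow> ?\<Phi> x > 0) \<longleftrightarrow> ?on_lattice")
proof
  assume ?on_lattice
  show "\<forall>x. x \<noteq> 0 \<longrightarrow> ?\<Phi> x > 0"
  proof (intro allI impI)
    fix x :: "real ^ 'r"
    assume "x \<noteq> 0"
    obtain y where "y \<in> coch_lattice" "y \<noteq> 0" "sgn (?\<Phi> y) = sgn (?\<Phi> x)"
      using assms \<open>x \<noteq> 0\<close> by (rule lattice_point_with_same_sign_of_sum_abs)
    with \<open>?on_lattice\<close> show "?\<Phi> x > 0"
      by (metis sgn_1_pos)
  qed
qed blast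

lemma rat_imag_weight_Im: "rat_imag_weight w \<Longrightarrow> rational_functional (\<lambda>x. Im (w x))"
  unfolding rat_imag_weight_def rational_functional_def
  using linear_compose[of w Im] bounded_linear_Im
  by (auto simp: o_def linear_conv_bounded_linear)

lemma rat_imag_weight_cmod: "rat_imag_weight w \<Longrightarrow> cmod (w x) = \<bar>Im (w x)\<bar>"
  by (simp add: rat_imag_weight_def cmod_def)

theorem mainTheorem5:
  fixes n :: nat
    and a :: "nat \<Rightarrow> real ^ 'r \<Rightarrow> complex"
    and Rpos :: "(real ^ 'r \<Rightarrow> complex) set"
  assumes "\<And>j. j \<in> {1..n} \<Longrightarrow> rat_imag_weight (a j)"
    and "finite Rpos"
    and "\<And>\<alpha>. \<alpha> \<in> Rpos \<Longrightarrow> rat_imag_weight \<alpha>"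
  shows "(\<forall>\<beta>::real ^ 'r. \<beta> \<noteq> 0 \<longrightarrow> Delta n a Rpos \<beta> > 0) \<longleftrightarrow>
         (\<forall>\<beta>\<in>coch_lattice. \<beta> \<noteq> 0 \<longrightarrow> Delta n a Rpos \<beta> > 0)"
proof -
  let ?I = "{1..n} <+> Rpos"
  define f where "f = case_sum (\<lambda>j \<beta>. Im (a j \<beta>)) (\<lambda>\<alpha> \<beta>. Im (\<alpha> \<beta>))"
  define c :: "nat + (real ^ 'r \<Rightarrow> complex) \<Rightarrow> real" where "c = case_sum (\<lambda>_. 1/2) (\<lambda>_. -1)"
  have "Delta n a Rpos \<beta> = (\<Sum>i\<in>?I. c i * \<bar>f i \<beta>\<bar>)" for \<beta>
  proof -
    have "(\<Sum>j=1..n. cmod (a j \<beta>)) = (\<Sum>j=1..n. \<bar>Im (a j \<beta>)\<bar>)"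
      using assms(1) by (intro sum.cong) (auto simp: rat_imag_weight_cmod)
    moreover have "(\<Sum>\<alpha>\<in>Rpos. cmod (\<alpha> \<beta>)) = (\<Sum>\<alpha>\<in>Rpos. \<bar>Im (\<alpha> \<beta>)\<bar>)"
      using assms(3) by (intro sum.cong) (auto simp: rat_imag_weight_cmod)
    ultimately show ?thesis
      using assms(2) by (simp add: Delta_def sum.Plus c_def f_def sum_distrib_left sum_negf)
  qed
  moreover have "\<forall>i\<in>?I. rational_functional (f i)"
    using assms by (auto simp: f_def rat_imag_weight_Im)
  moreover have "\<forall>i\<in>?I. c i \<in> \<rat>"
    by (auto simp: c_def)
  ultimately show ?thesis
    using sum_abs_pos_iff_pos_on_lattice[of ?I f c] assms(2) by simp
qed

end
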